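(* Let $d\in\mathbb{N}$ and $\beta_1,\ldots,\beta_d\in\mathbb{R}$. The multi-indexed sequence $$\bar F_{n_1,\ldots,n_d}=\prod_{k=1}^d\beta_k^{n_{(d-k+1)}-n_{(d-k)}},\qquad n_1,\ldots,n_d\in\mathbb{N}_0,$$ is a $d$-dimensional discrete survival function (i.e. there is an $\mathbb{N}^d$-valued random vector $(\tau_1,\ldots,\tau_d)$ with $\bar F_{n_1,\ldots,n_d}=\mathbb{P}(\tau_1>n_1,\ldots,\tau_d>n_d)$ for all $n_i\in\mathbb{N}_0$) if and only if $(1,\beta_1,\ldots,\beta_d)\in\mathcal{M}_{d+1}$. In that case it is the survival function of an exchangeable $d$-variate wide-sense geometric law.
   Context: $\mathbb{N}=\{1,2,\ldots\}$, $\mathbb{N}_0=\{0\}\cup\mathbb{N}$; $n_{(0)}:=0\le n_{(1)}\le\cdots\le n_{(d)}$ is the ordered list of $n_1,\ldots,n_d$; $0^0:=1$. $\nabla^jx_k:=\sum_{i=0}^j(-1)^i\binom{j}{i}x_{k+i}$. $\mathcal{M}_{d+1}$ is the set of $(x_0,\ldots,x_d)\in\mathbb{R}^{d+1}$ with $x_0=1$, $x_1<1$, and $\nabla^jx_k\ge0$ for $k=0,\ldots,d$, $j=0,\ldots,d-k$. Wide-sense geometric law: for $\tilde p_I\in[0,1]$, $I\subseteq\{1,\ldots,d\}$, $\sum_I\tilde p_I=1$, $\sum_{I\not\ni k}\tilde p_I<1$ for all $k$, run i.i.d. trials with outcome $I$ of probability $\tilde p_I$, let $\tilde E_I$ be the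 first trial with outcome $I$, and $\tau_k=\min\{\tilde E_I:k\in I\}$. *)

theory Defs
  imports "HOL-Probability.Probability"
begin

definition ord_stat :: "nat \<Rightarrow> (nat \<Rightarrow> nat) \<Rightarrow> nat \<Rightarrow> nat" where
  "ord_stat d n j = (if j = 0 then 0 else sort (map n [1..<d+1]) ! (j - 1))"

definition Fbar :: "nat \<Rightarrow> (nat \<Rightarrow> real) \<Rightarrow> (nat \<Rightarrow> nat) \<Rightarrow> real" where
  "Fbar d \<beta> n = (\<Prod>k=1..d. \<beta> k ^ (ord_stat d n (d - k + 1) - ord_stat d n (d - k)))"

definition nabla :: "nat \<Rightarrow> (nat \<Rightarrow> real) \<Rightarrow> nat \<Rightarrow> real" where
  "nabla j x k = (\<Sum>i=0..j. (-1) ^ i * real (j choose i) * x (k + i))"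

definition in_M :: "nat \<Rightarrow> (nat \<Rightarrow> real) \<Rightarrow> bool" where
  "in_M d x \<longleftrightarrow> x 0 = 1 \<and> x 1 < 1 \<and>
     (\<forall>k\<le>d. \<forall>j\<le>d - k. nabla j x k \<ge> 0)"

definition is_discrete_survival :: "nat \<Rightarrow> ((nat \<Rightarrow> nat) \<Rightarrow> real) \<Rightarrow> bool" where
  "is_discrete_survival d F \<longleftrightarrow>
     (\<exists>P :: (nat \<Rightarrow> nat) pmf.
        set_pmf P \<subseteq> {t. (\<forall>i\<in>{1..d}. 1 \<le> t i) \<and> (\<forall>i. i \<notin> {1..d} \<longrightarrow> t i = 0)} \<and>
        (\<forall>n. measure_pmf.prob P {t. \<forall>i\<in>{1..d}. n i < t i} = F n))"

(* wide-sense geometric law: parameters p_I = pmf q I, I \<subseteq> {1..d}, summing to 1,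
   with sum_{I not containing k} p_I < 1 for all k *)
definition wsg_params :: "nat \<Rightarrow> nat set pmf \<Rightarrow> bool" where
  "wsg_params d q \<longleftrightarrow> set_pmf q \<subseteq> Pow {1..d} \<and>
     (\<forall>k\<in>{1..d}. measure_pmf.prob q {I. k \<notin> I} < 1)"

definition wsg_exchangeable :: "nat \<Rightarrow> nat set pmf \<Rightarrow> bool" where
  "wsg_exchangeable d q \<longleftrightarrow>
     (\<forall>I J. I \<subseteq> {1..d} \<longrightarrow> J \<subseteq> {1..d} \<longrightarrow> card I = card J \<longrightarrow> pmf q I = pmf q J)"

(* i.i.d. trials omega = (omega!!0, omega!!1, ...) (trial number t+1 is omega!!t);
   tau_k = index of the first trial whose outcome I contains k (= infinity if none) *)
definition wsg_tau :: "nat set stream \<Rightarrow> nat \<Rightarrow> enat" where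
  "wsg_tau \<omega> k = (if \<exists>t. k \<in> \<omega> !! t then enat (Suc (LEAST t. k \<in> \<omega> !! t)) else \<infinity>)"

definition wsg_survival :: "nat \<Rightarrow> nat set pmf \<Rightarrow> (nat \<Rightarrow> nat) \<Rightarrow> real" where
  "wsg_survival d q n = measure (stream_space (measure_pmf q))
     {\<omega> \<in> space (stream_space (measure_pmf q)). \<forall>k\<in>{1..d}. enat (n k) < wsg_tau \<omega> k}"

end

theory Submission
  imports Defs
begin

text \<open>Write x = (1, beta_1, ..., beta_d). Sorting the coordinates shows that Fbar_n is the
  product over the time steps t < N of x_c(t), where c(t) is the number of coordinates with
  n_k > t. For the wide-sense geometric law with exchangeable parameters
  p_I = nabla^|I| x_(d-|I|), binomial inversion shows that a single trial misses a given
  k-set of coordinates with probability x_k, so its survival function has the same product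
  form; the conditions defining M_(d+1) say precisely that these p_I are a probability
  distribution. Conversely, for a random vector with survival function Fbar, inclusion-exclusion
  shows that nabla^j x_k is the probability that the coordinates in a k-set exceed 1 while
  those in a disjoint j-set equal 1, and beta_1^m = P(tau_1 > m) tending to 0 forces beta_1 < 1.\<close>

section \<open>Iterated differences\<close>

lemma nabla_0 [simp]: "nabla 0 x k = x k"
  by (simp add: nabla_def)

lemma nabla_Suc: "nabla (Suc j) x k = nabla j x k - nabla j x (Suc k)"
proof -
  have shift: "nabla (Suc j) x k
      = x k + (\<Sum>i=0..j. (-1)^(Suc i) * real (Suc j choose Suc i) * x (k + Suc i))"
    unfolding nabla_def by (subst sum.atLeast0_atMost_Suc_shift) simp
  have pascal: "(\<Sum>i=0..j. (-1)^(Suc i) * real (Suc j choose Suc i) * x (k + Suc i))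
     = - (\<Sum>i=0..j. (-1)^i * real (j choose i) * x (Suc k + i))
       + (\<Sum>i=0..j. (-1)^(Suc i) * real (j choose Suc i) * x (k + Suc i))"
    by (simp add: sum_negf[symmetric] sum.distrib[symmetric] algebra_simps)
  have "nabla j x k = x k + (\<Sum>i=0..j. (-1)^(Suc i) * real (j choose Suc i) * x (k + Suc i))"
  proof (cases j)
    case (Suc j')
    have "nabla j x k = x k + (\<Sum>i=0..j'. (-1)^(Suc i) * real (j choose Suc i) * x (k + Suc i))"
      unfolding nabla_def Suc by (subst sum.atLeast0_atMost_Suc_shift) simp
    also have "(\<Sum>i=0..j'. (-1)^(Suc i) * real (j choose Suc i) * x (k + Suc i))
       = (\<Sum>i=0..j. (-1)^(Suc i) * real (j choose Suc i) * x (k + Suc i))"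
      unfolding Suc by (subst sum.atLeast0_atMost_Suc) (simp add: binomial_eq_0)
    finally show ?thesis .
  qed (simp add: nabla_def)
  then show ?thesis using shift pascal by (simp add: nabla_def)
qed

lemma sum_binomial_nabla: "(\<Sum>i=0..r. real (r choose i) * nabla i x (k + r - i)) = x k"
proof (induction r arbitrary: k)
  case (Suc r)
  have "(\<Sum>i=0..Suc r. real (Suc r choose i) * nabla i x (k + Suc r - i))
      = x (k + Suc r) + (\<Sum>i=0..r. real (r choose i) * nabla (Suc i) x (k + r - i))
        + (\<Sum>i=0..r. real (r choose Suc i) * nabla (Suc i) x (k + r - i))"
    by (subst sum.atLeast0_atMost_Suc_shift) (simp add: sum.distrib[symmetric] algebra_simps)
  also have "(\<Sum>i=0..r. real (r choose i) * nabla (Suc i) x (k + r - i))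
     = (\<Sum>i=0..r. real (r choose i) * nabla i x (k + r - i))
       - (\<Sum>i=0..r. real (r choose i) * nabla i x (Suc k + r - i))"
    by (simp add: sum_subtractf[symmetric] nabla_Suc algebra_simps Suc_diff_le)
  also have "(\<Sum>i=0..r. real (r choose Suc i) * nabla (Suc i) x (k + r - i))
      = (\<Sum>i=0..Suc r. real (r choose i) * nabla i x (Suc k + r - i)) - x (Suc k + r)"
    by (subst sum.atLeast0_atMost_Suc_shift) (simp add: Suc_diff_le)
  also have "(\<Sum>i=0..Suc r. real (r choose i) * nabla i x (Suc k + r - i))
      = (\<Sum>i=0..r. real (r choose i) * nabla i x (Suc k + r - i))"
    by (subst sum.atLeast0_atMost_Suc) simp
  finally show ?case using Suc.IH[of k] Suc.IH[of "Suc k"] by simp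
qed simp

section \<open>Order statistics\<close>

lemma sorted_nth_le_iff_less_length_filter:
  fixes L :: "'a::linorder list"
  assumes "sorted L" and "i < length L"
  shows "L ! i \<le> t \<longleftrightarrow> i < length (filter (\<lambda>v. v \<le> t) L)"
proof -
  have len: "length (filter (\<lambda>v. v \<le> t) L) = card {j. j < length L \<and> L ! j \<le> t}"
    by (rule length_filter_conv_card)
  show ?thesis
  proof
    assume "L ! i \<le> t"
    then have "{..i} \<subseteq> {j. j < length L \<and> L ! j \<le> t}"
      using assms by (auto intro: order_trans[OF sorted_nth_mono])
    from card_mono[OF _ this] show "i < length (filter (\<lambda>v. v \<le> t) L)" unfolding len by simp
  next
    assume less: "i < length (filter (\<lambda>v. v \<le> t) L)"
    show "L ! i \<le> t"
    proof (rule ccontr)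
      assume "\<not> L ! i \<le> t"
      then have "{j. j < length L \<and> L ! j \<le> t} \<subseteq> {..<i}"
        using assms by (auto simp: not_less intro: order_trans[OF sorted_nth_mono] dest: not_le_imp_less)
      from card_mono[OF _ this] less show False unfolding len by simp
    qed
  qed
qed

lemma ord_stat_le_iff:
  assumes "j \<le> d"
  shows "ord_stat d n j \<le> t \<longleftrightarrow> card {k\<in>{1..d}. t < n k} \<le> d - j"
proof -
  define L where "L = sort (map n [1..<d+1])"
  have exceed_le: "card {k\<in>{1..d}. t < n k} \<le> d"
    by (rule order_trans[OF card_mono[of "{1..d}"]]) auto
  have "length (filter (\<lambda>v. v \<le> t) L) = length (filter (\<lambda>k. n k \<le> t) [1..<d+1])"
    unfolding L_def by (simp add: filter_sort filter_map comp_def del: sort_key_simps upt_Suc)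
  also have "\<dots> = card {k\<in>{1..d}. n k \<le> t}"
    by (subst distinct_length_filter) (auto intro!: arg_cong[where f=card])
  also have "{k\<in>{1..d}. n k \<le> t} = {1..d} - {k\<in>{1..d}. t < n k}"
    by auto
  also have "card \<dots> = d - card {k\<in>{1..d}. t < n k}"
    by (subst card_Diff_subset) auto
  finally have count: "length (filter (\<lambda>v. v \<le> t) L) = d - card {k\<in>{1..d}. t < n k}" .
  show ?thesis
  proof (cases j)
    case (Suc i)
    have "ord_stat d n j = L ! i"
      by (simp add: ord_stat_def L_def Suc del: upt_Suc)
    moreover have "L ! i \<le> t \<longleftrightarrow> i < length (filter (\<lambda>v. v \<le> t) L)"
      using Suc assms by (intro sorted_nth_le_iff_less_length_filter) (simp_all add: L_def)
    ultimately show ?thesis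
      using Suc assms exceed_le by (simp add: count) linarith
  qed (use exceed_le in \<open>simp add: ord_stat_def\<close>)
qed

lemma card_level_set_exceeding:
  assumes bound: "\<forall>k\<in>{1..d}. n k \<le> N" and m: "m \<in> {1..d}"
  shows "card {t\<in>{..<N}. card {k\<in>{1..d}. t < n k} = m}
       = ord_stat d n (d - m + 1) - ord_stat d n (d - m)"
proof -
  define c where "c t = card {k\<in>{1..d}. t < n k}" for t
  have c_le: "c t \<le> d" for t
    unfolding c_def by (rule order_trans[OF card_mono[of "{1..d}"]]) auto
  have "c N = 0"
    using bound by (auto simp: c_def not_less)
  then have upper: "ord_stat d n (d - m + 1) \<le> N"
    using m ord_stat_le_iff[of "d - m + 1" d n N] unfolding c_def[symmetric] by auto
  have level: "c t = m \<longleftrightarrow> ord_stat d n (d - m) \<le> t \<and> \<not> ord_stat d n (d - m + 1) \<le> t" for t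
  proof -
    have "d - m \<le> d" "d - m + 1 \<le> d"
      using m by auto
    from this[THEN ord_stat_le_iff, of n t] show ?thesis
      using m c_le[of t] unfolding c_def[symmetric] by auto
  qed
  have "{t\<in>{..<N}. c t = m} = {ord_stat d n (d - m)..<ord_stat d n (d - m + 1)}"
    using upper by (auto simp: level)
  then show ?thesis by (simp add: c_def)
qed

lemma Fbar_eq_prod_card_exceeding:
  assumes bound: "\<forall>k\<in>{1..d}. n k \<le> N"
  shows "Fbar d \<beta> n = (\<Prod>t<N. (\<lambda>m. if m = 0 then 1 else \<beta> m) (card {k\<in>{1..d}. t < n k}))"
proof -
  define x where "x m = (if m = 0 then 1 else \<beta> m)" for m
  define c where "c t = card {k\<in>{1..d}. t < n k}" for t
  have c_le: "c t \<le> d" for t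
    unfolding c_def by (rule order_trans[OF card_mono[of "{1..d}"]]) auto
  have "(\<Prod>t<N. x (c t)) = (\<Prod>m\<in>{0..d}. \<Prod>t\<in>{t\<in>{..<N}. c t = m}. x (c t))"
    by (rule prod.group[symmetric]) (auto simp: c_le)
  also have "\<dots> = (\<Prod>m\<in>{1..d}. x m ^ card {t\<in>{..<N}. c t = m})"
    by (subst prod.atLeast_Suc_atMost) (simp_all add: x_def)
  also have "\<dots> = Fbar d \<beta> n"
    unfolding Fbar_def c_def
  proof (intro prod.cong refl)
    fix m assume m: "m \<in> {1..d}"
    show "x m ^ card {t\<in>{..<N}. card {k\<in>{1..d}. t < n k} = m}
        = \<beta> m ^ (ord_stat d n (d - m + 1) - ord_stat d n (d - m))"
      unfolding card_level_set_exceeding[OF bound m] using m by (simp add: x_def)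
  qed
  finally show ?thesis unfolding x_def c_def by (rule sym)
qed

section \<open>Wide-sense geometric laws\<close>

lemma pred_snth_measure_pmf [measurable]:
  "Measurable.pred (stream_space (measure_pmf q)) (\<lambda>\<omega>. P (\<omega> !! t))"
  by (rule measurable_compose[OF measurable_snth]) simp

lemma pred_snth_count_space [measurable]:
  "Measurable.pred (stream_space (count_space UNIV)) (\<lambda>\<omega>. P (\<omega> !! t))"
  by (rule measurable_compose[OF measurable_snth]) simp

lemma measure_stream_space_snth_in:
  fixes q :: "'a pmf"
  shows "measure (stream_space (measure_pmf q))
      {\<omega> \<in> space (stream_space (measure_pmf q)). \<forall>t<N. \<omega> !! t \<in> C t}
    = (\<Prod>t<N. measure_pmf.prob q (C t))"
proof (induction N arbitrary: C)
  case 0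
  interpret S: prob_space "stream_space (measure_pmf q)"
    by (rule prob_space.prob_space_stream_space[OF measure_pmf.prob_space_axioms])
  show ?case by (simp add: S.prob_space)
next
  case (Suc N)
  have meas: "{\<omega> \<in> space (stream_space (measure_pmf q)). \<forall>t<Suc N. \<omega> !! t \<in> C t}
      \<in> sets (stream_space (measure_pmf q))"
    by measurable
  have cons: "(\<forall>s<Suc N. (x ## \<omega>) !! s \<in> C s) \<longleftrightarrow> x \<in> C 0 \<and> (\<forall>s<N. \<omega> !! s \<in> C (Suc s))"
    for x \<omega>
    by (auto simp: All_less_Suc2 split: nat.splits)
  have "ennreal (measure (stream_space (measure_pmf q))
      {\<omega> \<in> space (stream_space (measure_pmf q)). \<forall>t<Suc N. \<omega> !! t \<in> C t})
    = (\<integral>\<^sup>+x. ennreal (measure (stream_space (measure_pmf q))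
        {\<omega> \<in> space (stream_space (measure_pmf q)). \<forall>t<Suc N. (x ## \<omega>) !! t \<in> C t}) \<partial>measure_pmf q)"
    by (rule prob_space.prob_stream_space[OF measure_pmf.prob_space_axioms meas])
  also have "\<dots> = (\<integral>\<^sup>+x. ennreal (\<Prod>t<N. measure_pmf.prob q (C (Suc t))) * indicator (C 0) x
      \<partial>measure_pmf q)"
    unfolding cons using Suc.IH[of "\<lambda>t. C (Suc t)"]
    by (intro nn_integral_cong) (auto split: split_indicator)
  also have "\<dots> = ennreal (\<Prod>t<N. measure_pmf.prob q (C (Suc t))) * emeasure (measure_pmf q) (C 0)"
    by (subst nn_integral_cmult_indicator) auto
  also have "\<dots> = ennreal (measure_pmf.prob q (C 0) * (\<Prod>t<N. measure_pmf.prob q (C (Suc t))))"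
    by (simp add: measure_pmf.emeasure_eq_measure ennreal_mult'[symmetric] prod_nonneg mult.commute)
  also have "measure_pmf.prob q (C 0) * (\<Prod>t<N. measure_pmf.prob q (C (Suc t)))
      = (\<Prod>t<Suc N. measure_pmf.prob q (C t))"
    by (simp only: prod.lessThan_Suc_shift)
  finally show ?case by (simp add: prod_nonneg)
qed

lemma enat_less_wsg_tau_iff: "enat m < wsg_tau \<omega> k \<longleftrightarrow> (\<forall>t<m. k \<notin> \<omega> !! t)"
proof (cases "\<exists>t. k \<in> \<omega> !! t")
  case True
  define L where "L = (LEAST t. k \<in> \<omega> !! t)"
  have "k \<in> \<omega> !! L"
    unfolding L_def using True by (rule LeastI_ex)
  moreover have "k \<notin> \<omega> !! t" if "t < L" for t
    using that not_less_Least unfolding L_def by blast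
  ultimately show ?thesis
    using True by (auto simp: wsg_tau_def L_def[symmetric] less_Suc_eq_le not_le[symmetric])
qed (simp add: wsg_tau_def)

lemma wsg_survival_eq_prod:
  assumes "\<forall>k\<in>{1..d}. n k \<le> N"
  shows "wsg_survival d q n = (\<Prod>t<N. measure_pmf.prob q {I. \<forall>k\<in>{1..d}. t < n k \<longrightarrow> k \<notin> I})"
proof -
  have "{\<omega> \<in> space (stream_space (measure_pmf q)). \<forall>k\<in>{1..d}. enat (n k) < wsg_tau \<omega> k}
    = {\<omega> \<in> space (stream_space (measure_pmf q)). \<forall>t<N. \<omega> !! t \<in> {I. \<forall>k\<in>{1..d}. t < n k \<longrightarrow> k \<notin> I}}"
    using assms by (auto simp: enat_less_wsg_tau_iff)
  then show ?thesis
    unfolding wsg_survival_def by (simp only: measure_stream_space_snth_in)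
qed

lemma AE_stream_space_ex_snth_mem:
  assumes "measure_pmf.prob q {I. k \<notin> I} < 1"
  shows "AE \<omega> in stream_space (measure_pmf q). \<exists>t. k \<in> \<omega> !! t"
proof -
  define S where "S = stream_space (measure_pmf q)"
  interpret S: prob_space S
    unfolding S_def by (rule prob_space.prob_space_stream_space[OF measure_pmf.prob_space_axioms])
  define c where "c = measure_pmf.prob q {I. k \<notin> I}"
  define never where "never = {\<omega>\<in>space S. \<not> (\<exists>t. k \<in> \<omega> !! t)}"
  have meas: "never \<in> sets S"
    unfolding never_def S_def by measurable
  have "measure S never \<le> c ^ m" for m
  proof -
    have "measure S never \<le> measure S {\<omega>\<in>space S. \<forall>t<m. \<omega> !! t \<in> {I. k \<notin> I}}"
      by (rule S.finite_measure_mono) (auto simp: never_def S_def)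
    also have "\<dots> = c ^ m"
      unfolding S_def c_def using measure_stream_space_snth_in[of q m "\<lambda>_. {I. k \<notin> I}"] by simp
    finally show ?thesis .
  qed
  moreover have "(\<lambda>m. c ^ m) \<longlonglongrightarrow> 0"
    using assms by (intro LIMSEQ_power_zero) (simp add: c_def)
  ultimately have "measure S never \<le> 0"
    by (intro LIMSEQ_le_const) auto
  then have "emeasure S never = 0"
    by (simp add: S.emeasure_eq_measure antisym)
  then show ?thesis
    unfolding S_def[symmetric] never_def by (subst AE_iff_measurable[OF meas[unfolded never_def] refl])
qed

lemma countable_valued_distr_pmf:
  assumes "prob_space M" and "countable V" and X_values: "\<forall>\<omega>\<in>space M. X \<omega> \<in> V"
    and fibres: "\<And>v. {\<omega>\<in>space M. X \<omega> = v} \<in> sets M"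
  obtains P where "set_pmf P \<subseteq> V" and "\<And>A. measure_pmf.prob P A = measure M (X -` A \<inter> space M)"
proof -
  interpret M: prob_space M by fact
  have X_meas: "X \<in> M \<rightarrow>\<^sub>M count_space UNIV"
  proof (rule measurableI)
    fix A
    have "X -` A \<inter> space M = (\<Union>v\<in>A \<inter> V. {\<omega>\<in>space M. X \<omega> = v})"
      using X_values by auto
    also have "\<dots> \<in> sets M"
      using \<open>countable V\<close> fibres by (intro sets.countable_UN') auto
    finally show "X -` A \<inter> space M \<in> sets M" .
  qed simp
  define D where "D = distr M (count_space UNIV) X"
  interpret D: prob_space D
    unfolding D_def by (rule M.prob_space_distr[OF X_meas])
  have sets_D: "sets D = UNIV"
    by (simp add: D_def)
  have "AE x in D. x \<in> V"
    unfolding D_def by (subst AE_distr_iff[OF X_meas]) (simp_all add: X_values)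
  then have "AE x in D. measure D {x} \<noteq> 0"
    using D.AE_support_countable[OF sets_D] \<open>countable V\<close> by blast
  then have D_eq: "measure_pmf (Abs_pmf D) = D"
    by (intro Abs_pmf_inverse) (simp add: D.prob_space_axioms sets_D)
  have prob: "measure_pmf.prob (Abs_pmf D) A = measure M (X -` A \<inter> space M)" for A
    using D_eq measure_distr[OF X_meas, of A] by (simp add: D_def)
  have "set_pmf (Abs_pmf D) \<subseteq> V"
  proof
    fix v assume "v \<in> set_pmf (Abs_pmf D)"
    then have "X -` {v} \<inter> space M \<noteq> {}"
      using prob[of "{v}"] by (auto simp: set_pmf_iff pmf.rep_eq)
    then show "v \<in> V"
      using X_values by auto
  qed
  then show ?thesis using prob by (rule that)
qed

text \<open>Infinite values of tau_k (a null event) are replaced by 1, giving a genuinely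
  N^d-valued random vector.\<close>

lemma wsg_survival_is_discrete_survival:
  assumes "wsg_params d q"
  shows "is_discrete_survival d (wsg_survival d q)"
proof -
  define S where "S = stream_space (measure_pmf q)"
  interpret S: prob_space S
    unfolding S_def by (rule prob_space.prob_space_stream_space[OF measure_pmf.prob_space_axioms])
  define \<tau> where "\<tau> \<omega> i = (if i \<in> {1..d} then (if \<exists>t. i \<in> \<omega> !! t
      then Suc (LEAST t. i \<in> \<omega> !! t) else 1) else 0)" for \<omega> i
  define V where "V = {f::nat\<Rightarrow>nat. (\<forall>i\<in>{1..d}. 1 \<le> f i) \<and> (\<forall>i. i \<notin> {1..d} \<longrightarrow> f i = 0)}"
  have "V \<subseteq> (\<lambda>g i. if i \<in> {1..d} then g i else 0) ` ({1..d} \<rightarrow>\<^sub>E UNIV)"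
  proof
    fix f assume "f \<in> V"
    then have "f = (\<lambda>i. if i \<in> {1..d} then restrict f {1..d} i else 0)"
      by (auto simp: V_def fun_eq_iff)
    then show "f \<in> (\<lambda>g i. if i \<in> {1..d} then g i else 0) ` ({1..d} \<rightarrow>\<^sub>E UNIV)"
      by (intro image_eqI[where x="restrict f {1..d}"]) auto
  qed
  then have "countable V"
    by (rule countable_subset) (intro countable_image countable_PiE; simp)
  moreover have "\<forall>\<omega>\<in>space S. \<tau> \<omega> \<in> V"
    by (auto simp: V_def \<tau>_def)
  moreover have "{\<omega>\<in>space S. \<tau> \<omega> = v} \<in> sets S" for v
  proof -
    have [measurable]: "(\<lambda>\<omega>. \<tau> \<omega> i) \<in> S \<rightarrow>\<^sub>M count_space UNIV" for i
      unfolding \<tau>_def S_def by measurable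
    have "{\<omega>\<in>space S. \<tau> \<omega> = v} = {\<omega>\<in>space S. \<forall>i. \<tau> \<omega> i = v i}"
      by (auto simp: fun_eq_iff)
    also have "\<dots> \<in> sets S"
      by measurable
    finally show ?thesis .
  qed
  ultimately obtain P where P_supp: "set_pmf P \<subseteq> V"
    and P_prob: "\<And>A. measure_pmf.prob P A = measure S (\<tau> -` A \<inter> space S)"
    using countable_valued_distr_pmf[OF S.prob_space_axioms] by blast
  have finite_tau: "AE \<omega> in S. \<forall>k\<in>{1..d}. \<exists>t. k \<in> \<omega> !! t"
    using assms unfolding wsg_params_def S_def
    by (subst AE_finite_all) (auto intro: AE_stream_space_ex_snth_mem)
  have "measure_pmf.prob P {t. \<forall>i\<in>{1..d}. n i < t i} = wsg_survival d q n" for n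
  proof -
    have "measure_pmf.prob P {t. \<forall>i\<in>{1..d}. n i < t i}
        = measure S {\<omega>\<in>space S. \<forall>i\<in>{1..d}. n i < \<tau> \<omega> i}"
      unfolding P_prob by (rule arg_cong[where f="measure S"]) auto
    also have "\<dots> = measure S {\<omega>\<in>space S. \<forall>k\<in>{1..d}. enat (n k) < wsg_tau \<omega> k}"
    proof (rule measure_eq_AE)
      show "AE \<omega> in S. (\<omega> \<in> {\<omega>\<in>space S. \<forall>i\<in>{1..d}. n i < \<tau> \<omega> i}) =
          (\<omega> \<in> {\<omega>\<in>space S. \<forall>k\<in>{1..d}. enat (n k) < wsg_tau \<omega> k})"
        using finite_tau by eventually_elim (auto simp: \<tau>_def wsg_tau_def)
      show "{\<omega>\<in>space S. \<forall>i\<in>{1..d}. n i < \<tau> \<omega> i} \<in> sets S"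
        unfolding \<tau>_def S_def by measurable
      show "{\<omega>\<in>space S. \<forall>k\<in>{1..d}. enat (n k) < wsg_tau \<omega> k} \<in> sets S"
        unfolding enat_less_wsg_tau_iff S_def by measurable
    qed
    also have "\<dots> = wsg_survival d q n"
      by (simp add: wsg_survival_def S_def)
    finally show ?thesis .
  qed
  with P_supp show ?thesis
    unfolding is_discrete_survival_def V_def by blast
qed

section \<open>Exchangeable parameters\<close>

lemma sum_Pow_nabla:
  assumes "T \<subseteq> {1..d}"
  shows "(\<Sum>I\<in>Pow T. nabla (card I) x (d - card I)) = x (d - card T)"
proof -
  have fin: "finite T"
    using assms finite_subset by blast
  define r where "r = card T"
  have "r \<le> d"
    unfolding r_def using card_mono[OF _ assms] by simp
  have "(\<Sum>I\<in>Pow T. nabla (card I) x (d - card I))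
      = (\<Sum>i\<in>{0..r}. \<Sum>I\<in>{I\<in>Pow T. card I = i}. nabla (card I) x (d - card I))"
    by (rule sum.group[symmetric]) (use fin in \<open>auto simp: r_def intro: card_mono\<close>)
  also have "\<dots> = (\<Sum>i\<in>{0..r}. real (r choose i) * nabla i x ((d - r) + r - i))"
  proof (intro sum.cong refl)
    fix i
    have "{I\<in>Pow T. card I = i} = {B. B \<subseteq> T \<and> card B = i}"
      by auto
    then show "(\<Sum>I\<in>{I\<in>Pow T. card I = i}. nabla (card I) x (d - card I))
        = real (r choose i) * nabla i x ((d - r) + r - i)"
      using n_subsets[OF fin, of i] \<open>r \<le> d\<close> by (simp add: r_def)
  qed
  also have "\<dots> = x (d - r)"
    by (rule sum_binomial_nabla)
  finally show ?thesis
    by (simp add: r_def)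
qed

lemma exchangeable_wsg_params_exist:
  assumes M: "in_M d x"
  obtains q where "wsg_params d q" and "wsg_exchangeable d q"
    and "\<And>S. S \<subseteq> {1..d} \<Longrightarrow> measure_pmf.prob q {I. I \<inter> S = {}} = x (card S)"
proof -
  define f where "f I = (if I \<subseteq> {1..d} then nabla (card I) x (d - card I) else 0)" for I
  have nabla_nonneg: "0 \<le> nabla j x k" if "k \<le> d" "j \<le> d - k" for j k
    using M that unfolding in_M_def by blast
  have f_nonneg: "0 \<le> f I" for I
  proof (cases "I \<subseteq> {1..d}")
    case True
    then have "card I \<le> d"
      using card_mono[of "{1..d}" I] by simp
    then show ?thesis
      using True nabla_nonneg[of "d - card I" "card I"] by (simp add: f_def)
  qed (simp add: f_def)
  have sum_f: "(\<Sum>I\<in>Pow T. f I) = x (d - card T)" if "T \<subseteq> {1..d}" for T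
  proof -
    have "(\<Sum>I\<in>Pow T. f I) = (\<Sum>I\<in>Pow T. nabla (card I) x (d - card I))"
      using that by (intro sum.cong refl) (auto simp: f_def)
    then show ?thesis
      using sum_Pow_nabla[OF that] by simp
  qed
  have f_total: "(\<integral>\<^sup>+I. ennreal (f I) \<partial>count_space UNIV) = 1"
  proof -
    have "(\<integral>\<^sup>+I. ennreal (f I) \<partial>count_space UNIV) = (\<Sum>I\<in>Pow {1..d}. ennreal (f I))"
      by (rule nn_integral_count_space') (auto simp: f_def)
    also have "\<dots> = ennreal (x 0)"
      using f_nonneg sum_f[of "{1..d}"] by simp
    finally show ?thesis
      using M by (simp add: in_M_def)
  qed
  define q where "q = embed_pmf f"
  have pmf_q: "pmf q I = f I" for I
    unfolding q_def by (rule pmf_embed_pmf[OF f_nonneg f_total])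
  have set_q: "set_pmf q \<subseteq> Pow {1..d}"
    unfolding q_def set_embed_pmf[OF f_nonneg f_total] by (auto simp: f_def split: if_splits)
  have miss: "measure_pmf.prob q {I. I \<inter> S = {}} = x (card S)" if S: "S \<subseteq> {1..d}" for S
  proof -
    have "measure_pmf.prob q {I. I \<inter> S = {}} = measure_pmf.prob q (Pow ({1..d} - S))"
      using set_q by (intro measure_eq_AE AE_pmfI) auto
    also have "\<dots> = x (d - card ({1..d} - S))"
      by (simp add: measure_measure_pmf_finite pmf_q sum_f)
    also have "d - card ({1..d} - S) = card S"
      using S card_mono[OF _ S] by (subst card_Diff_subset) (auto intro: finite_subset)
    finally show ?thesis .
  qed
  have "wsg_params d q"
    unfolding wsg_params_def
  proof (intro conjI ballI set_q)
    fix k assume "k \<in> {1..d}"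
    then have "measure_pmf.prob q {I. k \<notin> I} = x 1"
      using miss[of "{k}"] by simp
    then show "measure_pmf.prob q {I. k \<notin> I} < 1"
      using M by (simp add: in_M_def)
  qed
  moreover have "wsg_exchangeable d q"
    unfolding wsg_exchangeable_def by (simp add: pmf_q f_def)
  ultimately show ?thesis
    using miss that by blast
qed

lemma wsg_survival_eq_Fbar:
  assumes miss: "\<And>S. S \<subseteq> {1..d} \<Longrightarrow>
      measure_pmf.prob q {I. I \<inter> S = {}} = (if card S = 0 then 1 else \<beta> (card S))"
  shows "wsg_survival d q n = Fbar d \<beta> n"
proof -
  define N where "N = (\<Sum>k\<in>{1..d}. n k)"
  have bound: "\<forall>k\<in>{1..d}. n k \<le> N"
    unfolding N_def by (auto intro: member_le_sum)
  have "wsg_survival d q n = (\<Prod>t<N. measure_pmf.prob q {I. \<forall>k\<in>{1..d}. t < n k \<longrightarrow> k \<notin> I})"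
    by (rule wsg_survival_eq_prod[OF bound])
  also have "\<dots> = (\<Prod>t<N. (\<lambda>m. if m = 0 then 1 else \<beta> m) (card {k\<in>{1..d}. t < n k}))"
  proof (intro prod.cong refl)
    fix t
    have exceeding: "{I. \<forall>k\<in>{1..d}. t < n k \<longrightarrow> k \<notin> I} = {I. I \<inter> {k\<in>{1..d}. t < n k} = {}}"
      by auto
    show "measure_pmf.prob q {I. \<forall>k\<in>{1..d}. t < n k \<longrightarrow> k \<notin> I}
        = (\<lambda>m. if m = 0 then 1 else \<beta> m) (card {k\<in>{1..d}. t < n k})"
      unfolding exceeding by (rule miss) auto
  qed
  also have "\<dots> = Fbar d \<beta> n"
    by (rule Fbar_eq_prod_card_exceeding[OF bound, symmetric])
  finally show ?thesis .
qed

lemma exchangeable_wsg_law_of_in_M: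
  assumes "in_M d (\<lambda>i. if i = 0 then 1 else \<beta> i)"
  shows "\<exists>q. wsg_params d q \<and> wsg_exchangeable d q \<and> (\<forall>n. wsg_survival d q n = Fbar d \<beta> n)"
proof -
  obtain q where "wsg_params d q" "wsg_exchangeable d q"
    and "\<And>S. S \<subseteq> {1..d} \<Longrightarrow>
      measure_pmf.prob q {I. I \<inter> S = {}} = (if card S = 0 then 1 else \<beta> (card S))"
    using exchangeable_wsg_params_exist[OF assms] by metis
  then show ?thesis
    using wsg_survival_eq_Fbar by blast
qed

section \<open>Necessity\<close>

lemma Fbar_indicator:
  assumes "A \<subseteq> {1..d}"
  shows "Fbar d \<beta> (\<lambda>i. if i \<in> A then m else 0) = (if card A = 0 then 1 else \<beta> (card A)) ^ m"
proof -
  have "Fbar d \<beta> (\<lambda>i. if i \<in> A then m else 0)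
      = (\<Prod>t<m. (\<lambda>c. if c = 0 then 1 else \<beta> c) (card {k\<in>{1..d}. t < (if k \<in> A then m else 0)}))"
    by (rule Fbar_eq_prod_card_exceeding) auto
  also have "\<dots> = (\<Prod>t<m. if card A = 0 then 1 else \<beta> (card A))"
  proof (intro prod.cong refl)
    fix t assume "t \<in> {..<m}"
    then have "{k\<in>{1..d}. t < (if k \<in> A then m else 0)} = A"
      using assms by auto
    then show "(\<lambda>c. if c = 0 then 1 else \<beta> c) (card {k\<in>{1..d}. t < (if k \<in> A then m else 0)})
        = (if card A = 0 then 1 else \<beta> (card A))"
      by simp
  qed
  finally show ?thesis
    by simp
qed

context
  fixes d :: nat and \<beta> :: "nat \<Rightarrow> real" and P :: "(nat \<Rightarrow> nat) pmf"
  assumes supp: "set_pmf P \<subseteq> {t. (\<forall>i\<in>{1..d}. 1 \<le> t i) \<and> (\<forall>i. i \<notin> {1..d} \<longrightarrow> t i = 0)}"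
    and surv: "\<And>n. measure_pmf.prob P {t. \<forall>i\<in>{1..d}. n i < t i} = Fbar d \<beta> n"
begin

lemma prob_all_greater:
  assumes "A \<subseteq> {1..d}"
  shows "measure_pmf.prob P {t. \<forall>i\<in>A. m < t i} = (if card A = 0 then 1 else \<beta> (card A)) ^ m"
proof -
  have "(\<forall>i\<in>A. m < t i) \<longleftrightarrow> (\<forall>i\<in>{1..d}. (if i \<in> A then m else 0) < t i)"
    if "t \<in> set_pmf P" for t
  proof -
    have "\<forall>i\<in>{1..d}. 0 < t i"
      using supp that by fastforce
    then show ?thesis
      using assms by auto
  qed
  then have support_eq: "{t. \<forall>i\<in>A. m < t i} \<inter> set_pmf P
      = {t. \<forall>i\<in>{1..d}. (if i \<in> A then m else 0) < t i} \<inter> set_pmf P"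
    by blast
  have "measure_pmf.prob P {t. \<forall>i\<in>A. m < t i}
      = measure_pmf.prob P {t. \<forall>i\<in>{1..d}. (if i \<in> A then m else 0) < t i}"
    by (subst (1 2) measure_Int_set_pmf[symmetric]) (simp only: support_eq)
  also have "\<dots> = (if card A = 0 then 1 else \<beta> (card A)) ^ m"
    unfolding surv using Fbar_indicator[OF assms] .
  finally show ?thesis .
qed

text \<open>Inclusion-exclusion, one coordinate of \<open>B\<close> at a time.\<close>

lemma prob_greater_one_on_le_one_on:
  assumes "finite B" and "A \<inter> B = {}" and "A \<union> B \<subseteq> {1..d}"
  shows "measure_pmf.prob P {t. (\<forall>i\<in>A. 1 < t i) \<and> (\<forall>i\<in>B. t i \<le> 1)}
       = nabla (card B) (\<lambda>i. if i = 0 then 1 else \<beta> i) (card A)"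
  using assms
proof (induction B arbitrary: A rule: finite_induct)
  case empty
  then show ?case
    using prob_all_greater[of A 1] by simp
next
  case (insert b B)
  let ?E = "\<lambda>A B. {t::nat\<Rightarrow>nat. (\<forall>i\<in>A. 1 < t i) \<and> (\<forall>i\<in>B. t i \<le> 1)}"
  have "finite A" "b \<notin> A"
    using insert.prems finite_subset by auto
  have "?E A B = ?E A (insert b B) \<union> ?E (insert b A) B"
    and "?E A (insert b B) \<inter> ?E (insert b A) B = {}"
    by auto
  then have "measure_pmf.prob P (?E A B)
      = measure_pmf.prob P (?E A (insert b B)) + measure_pmf.prob P (?E (insert b A) B)"
    by (simp add: measure_pmf.finite_measure_Union)
  moreover have "measure_pmf.prob P (?E A B) = nabla (card B) (\<lambda>i. if i = 0 then 1 else \<beta> i) (card A)"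
    using insert.IH[of A] insert.prems by auto
  moreover have "measure_pmf.prob P (?E (insert b A) B)
      = nabla (card B) (\<lambda>i. if i = 0 then 1 else \<beta> i) (Suc (card A))"
    using insert.IH[of "insert b A"] insert.prems insert.hyps \<open>finite A\<close> \<open>b \<notin> A\<close> by auto
  ultimately show ?case
    using insert.hyps by (simp add: nabla_Suc)
qed

lemma nabla_nonneg_of_survival:
  assumes "k \<le> d" and "j \<le> d - k"
  shows "0 \<le> nabla j (\<lambda>i. if i = 0 then 1 else \<beta> i) k"
proof -
  have "nabla j (\<lambda>i. if i = 0 then 1 else \<beta> i) k
      = measure_pmf.prob P {t. (\<forall>i\<in>{1..k}. 1 < t i) \<and> (\<forall>i\<in>{k+1..k+j}. t i \<le> 1)}"
    using assms by (subst prob_greater_one_on_le_one_on) auto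
  then show ?thesis
    by simp
qed

lemma beta_1_less_1:
  assumes "1 \<le> d"
  shows "\<beta> 1 < 1"
proof (rule ccontr)
  assume "\<not> \<beta> 1 < 1"
  then have ge: "1 \<le> \<beta> 1 ^ m" for m
    by (simp add: one_le_power)
  define D where "D m = {t::nat\<Rightarrow>nat. \<forall>i\<in>{1}. m < t i}" for m
  have "(\<lambda>m. measure_pmf.prob P (D m)) \<longlonglongrightarrow> measure_pmf.prob P (\<Inter>m. D m)"
    by (rule measure_pmf.finite_Lim_measure_decseq) (auto simp: decseq_def D_def)
  moreover have "(\<Inter>m. D m) = {}"
  proof -
    have "t \<notin> D (t 1)" for t
      by (simp add: D_def)
    then show ?thesis
      by blast
  qed
  moreover have "measure_pmf.prob P (D m) = \<beta> 1 ^ m" for m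
    unfolding D_def using prob_all_greater[of "{1}" m] assms by simp
  ultimately have "(\<lambda>m. \<beta> 1 ^ m) \<longlonglongrightarrow> 0"
    by simp
  then have "1 \<le> (0::real)"
    by (rule LIMSEQ_le_const) (use ge in auto)
  then show False
    by simp
qed

end

lemma in_M_of_discrete_survival:
  assumes "1 \<le> d" and "is_discrete_survival d (Fbar d \<beta>)"
  shows "in_M d (\<lambda>i. if i = 0 then 1 else \<beta> i)"
proof -
  obtain P :: "(nat \<Rightarrow> nat) pmf"
    where "set_pmf P \<subseteq> {t. (\<forall>i\<in>{1..d}. 1 \<le> t i) \<and> (\<forall>i. i \<notin> {1..d} \<longrightarrow> t i = 0)}"
      and "\<And>n. measure_pmf.prob P {t. \<forall>i\<in>{1..d}. n i < t i} = Fbar d \<beta> n"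
    using assms(2) unfolding is_discrete_survival_def by blast
  from nabla_nonneg_of_survival[OF this] beta_1_less_1[OF this assms(1)] show ?thesis
    unfolding in_M_def by simp
qed

theorem theorem3p2:
  fixes d :: nat and \<beta> :: "nat \<Rightarrow> real"
  assumes "1 \<le> d"
  shows "(is_discrete_survival d (Fbar d \<beta>) \<longleftrightarrow> in_M d (\<lambda>i. if i = 0 then 1 else \<beta> i))
       \<and> (is_discrete_survival d (Fbar d \<beta>) \<longrightarrow>
           (\<exists>q. wsg_params d q \<and> wsg_exchangeable d q \<and> (\<forall>n. wsg_survival d q n = Fbar d \<beta> n)))"
proof -
  have "is_discrete_survival d (Fbar d \<beta>)" if M: "in_M d (\<lambda>i. if i = 0 then 1 else \<beta> i)"
  proof -
    obtain q where "wsg_params d q" and "wsg_survival d q = Fbar d \<beta>"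
      using exchangeable_wsg_law_of_in_M[OF M] by fast
    then show ?thesis
      using wsg_survival_is_discrete_survival by metis
  qed
  then show ?thesis
    using in_M_of_discrete_survival[OF assms] exchangeable_wsg_law_of_in_M by blast
qed

end
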